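(* Let $S\subset[0,\infty)$ with $0\in S$, and let $\{f_n\colon S\to[0,\infty)\}$ be a sequence of decreasing right-continuous functions converging uniformly on $S$ to a function $f$. If $DP(\overline{f_n})\subset S$ for all $n$, then $f$ is decreasing and right-continuous and $DP(\overline{f})\subset S$.
   Context: For $S\subset[0,\infty)$ with $0\in S$, a function on $S$ is right-continuous if it is right-continuous for the relative topology of $S$. For a right-continuous decreasing $f\colon S\to[0,\infty)$ and $x\in\overline{S}$ (closure in $\mathbb{R}$), set $f(x+):=\sup\{f(y)\mid y\in(x,\infty)\cap S\}$ whenever $(x,\infty)\cap S\neq\emptyset$, and $f(x-):=\inf\{f(y)\mid y\in[0,x)\cap S\}$ if $x\neq0$, $f(0-):=f(0)$. Define $\overline{f}\colon\overline{S}\to[0,\infty)$ by $\overline{f}(x)=f(x)$ if $x\in S$, $\overline{f}(x)=f(x+)$ if $x\in\overline{S}\setminus S$ is a right accumulation point of $S$, and $\overline{f}(x)=f(x-)$ otherwise. With $\overline{f}(x-)$ defined by the same formula applied to $\overline{f}$ on $\overline{S}$, the set of left-jump points is $DP(\overline{f}):=\{x\in\overline{S}\setminus\{0\}\mid\overline{f}(x-)>\overline{f}(x)\}$. *)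

theory Defs
  imports "HOL-Analysis.Analysis"
begin

text \<open>Functions are modelled as total functions real => real; only values on S matter.\<close>

definition decreasing_on :: "real set \<Rightarrow> (real \<Rightarrow> real) \<Rightarrow> bool" where
  "decreasing_on S f \<longleftrightarrow> (\<forall>x\<in>S. \<forall>y\<in>S. x \<le> y \<longrightarrow> f y \<le> f x)"

definition right_cont_on :: "real set \<Rightarrow> (real \<Rightarrow> real) \<Rightarrow> bool" where
  "right_cont_on S f \<longleftrightarrow> (\<forall>x\<in>S. continuous (at x within (S \<inter> {x..})) f)"

definition rlim :: "real set \<Rightarrow> (real \<Rightarrow> real) \<Rightarrow> real \<Rightarrow> real" where
  "rlim S f x = Sup {f y | y. y \<in> S \<and> x < y}"

definition llim :: "real set \<Rightarrow> (real \<Rightarrow> real) \<Rightarrow> real \<Rightarrow> real" where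
  "llim S f x = (if x = 0 then f 0 else Inf {f y | y. y \<in> S \<and> 0 \<le> y \<and> y < x})"

definition right_acc :: "real set \<Rightarrow> real \<Rightarrow> bool" where
  "right_acc S x \<longleftrightarrow> x islimpt (S \<inter> {x<..})"

text \<open>The extension of f to the closure of S.\<close>
definition fbar :: "real set \<Rightarrow> (real \<Rightarrow> real) \<Rightarrow> real \<Rightarrow> real" where
  "fbar S f x = (if x \<in> S then f x
                 else if right_acc S x then rlim S f x
                 else llim S f x)"

definition DP :: "real set \<Rightarrow> (real \<Rightarrow> real) \<Rightarrow> real set" where
  "DP S f = {x \<in> closure S - {0}. llim (closure S) (fbar S f) x > fbar S f x}"

end

theory Submission
  imports Defs
begin

(* Taking the extension to closure S and the left limit (a supremum or infimum of values)
   are both 1-Lipschitz for the sup distance on S. Hence if |f - fn n| <= d on S, the left jump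
   llim (fbar f) x - fbar f x differs from the one of fn n by at most 2d. A positive jump of f
   at x therefore forces a positive jump of fn n at x for large n, so x lies in S.
   Monotonicity survives pointwise limits, and right continuity survives uniform limits by
   exchanging the two limits. *)

lemma cSUP_abs_diff_le:
  fixes g h :: "'a \<Rightarrow> real"
  assumes "bdd_above (g ` I)" "0 \<le> e" "\<forall>y\<in>I. \<bar>g y - h y\<bar> \<le> e"
  shows "\<bar>(SUP y\<in>I. g y) - (SUP y\<in>I. h y)\<bar> \<le> e"
proof (cases "I = {}")
  case True
  then show ?thesis using assms(2) by simp
next
  case False
  obtain B where B: "\<forall>y\<in>I. g y \<le> B" using assms(1) by (auto simp: bdd_above_def)
  then have h_bdd: "bdd_above (h ` I)"
    using assms(3) by (intro bdd_aboveI2[where M = "B + e"]) (force simp: abs_le_iff)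
  have "(SUP y\<in>I. g y) \<le> (SUP y\<in>I. h y) + e"
  proof (rule cSUP_least[OF False])
    fix y assume "y \<in> I"
    then show "g y \<le> (SUP y\<in>I. h y) + e"
      using cSUP_upper[OF _ h_bdd] assms(3) by (force simp: abs_le_iff)
  qed
  moreover have "(SUP y\<in>I. h y) \<le> (SUP y\<in>I. g y) + e"
  proof (rule cSUP_least[OF False])
    fix y assume "y \<in> I"
    then show "h y \<le> (SUP y\<in>I. g y) + e"
      using cSUP_upper[OF _ assms(1)] assms(3) by (force simp: abs_le_iff)
  qed
  ultimately show ?thesis by linarith
qed

lemma cINF_abs_diff_le:
  fixes g h :: "'a \<Rightarrow> real"
  assumes "bdd_below (g ` I)" "0 \<le> e" "\<forall>y\<in>I. \<bar>g y - h y\<bar> \<le> e"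
  shows "\<bar>(INF y\<in>I. g y) - (INF y\<in>I. h y)\<bar> \<le> e"
proof -
  have "bdd_above ((\<lambda>y. - g y) ` I)"
    using assms(1) by (metis bdd_above_uminus image_image)
  then have "\<bar>(SUP y\<in>I. - g y) - (SUP y\<in>I. - h y)\<bar> \<le> e"
    using assms(2,3) by (intro cSUP_abs_diff_le) auto
  then show ?thesis by (simp add: Inf_real_def image_image abs_minus_commute)
qed

lemma rlim_abs_diff_le:
  assumes "bdd_above (g ` S)" "0 \<le> e" "\<forall>y\<in>S. \<bar>g y - h y\<bar> \<le> e"
  shows "\<bar>rlim S g x - rlim S h x\<bar> \<le> e"
  unfolding rlim_def setcompr_eq_image
  using assms by (intro cSUP_abs_diff_le) (auto elim: bdd_above_mono)

lemma llim_abs_diff_le: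
  assumes "bdd_below (g ` S)" "0 \<in> S" "0 \<le> e" "\<forall>y\<in>S. \<bar>g y - h y\<bar> \<le> e"
  shows "\<bar>llim S g x - llim S h x\<bar> \<le> e"
  unfolding llim_def setcompr_eq_image
  using assms by (auto intro!: cINF_abs_diff_le elim: bdd_below_mono)

lemma fbar_abs_diff_le:
  assumes "bdd_above (g ` S)" "bdd_below (g ` S)" "0 \<in> S" "0 \<le> e"
    "\<forall>y\<in>S. \<bar>g y - h y\<bar> \<le> e"
  shows "\<bar>fbar S g x - fbar S h x\<bar> \<le> e"
  using assms rlim_abs_diff_le llim_abs_diff_le by (simp add: fbar_def)

lemma fbar_ge:
  assumes "S \<subseteq> {0..}" "0 \<in> S" "bdd_above (g ` S)" "\<forall>y\<in>S. m \<le> g y" "x \<in> closure S"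
  shows "m \<le> fbar S g x"
proof -
  consider "x \<in> S" | "x \<notin> S" "right_acc S x" | "x \<notin> S" "\<not> right_acc S x" by blast
  then show ?thesis
  proof cases
    case 1
    then show ?thesis using assms(4) by (simp add: fbar_def)
  next
    case 2
    then obtain y where y: "y \<in> S" "x < y"
      unfolding right_acc_def by (metis Int_emptyI greaterThan_iff islimpt_EMPTY)
    then have "g y \<le> rlim S g x"
      unfolding rlim_def setcompr_eq_image
      by (intro cSUP_upper bdd_above_mono[OF assms(3)]) auto
    then show ?thesis using 2 y assms(4) by (fastforce simp: fbar_def)
  next
    case 3
    have "closure S \<subseteq> {0..}" using assms(1) by (simp add: closure_minimal)
    then have "0 \<le> x" using assms(5) by auto
    moreover have "x \<noteq> 0" using 3 assms(2) by auto
    ultimately have "0 < x" by simp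
    then have "m \<le> llim S g x"
      unfolding llim_def setcompr_eq_image using assms(2,4) by (auto intro!: cINF_greatest)
    then show ?thesis using 3 by (simp add: fbar_def)
  qed
qed

lemma left_jump_abs_diff_le:
  assumes "S \<subseteq> {0..}" "0 \<in> S" "bdd_above (g ` S)" "bdd_below (g ` S)" "0 \<le> e"
    "\<forall>y\<in>S. \<bar>g y - h y\<bar> \<le> e"
  shows "\<bar>(llim (closure S) (fbar S g) x - fbar S g x)
           - (llim (closure S) (fbar S h) x - fbar S h x)\<bar> \<le> 2 * e"
proof -
  obtain m where "\<forall>y\<in>S. m \<le> g y" using assms(4) by (auto simp: bdd_below_def)
  then have "bdd_below (fbar S g ` closure S)"
    using fbar_ge[OF assms(1-3)] by (intro bdd_belowI2[where m = m])
  moreover have fbar_close: "\<forall>y. \<bar>fbar S g y - fbar S h y\<bar> \<le> e"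
    using fbar_abs_diff_le[OF assms(3,4,2,5,6)] by blast
  ultimately have "\<bar>llim (closure S) (fbar S g) x - llim (closure S) (fbar S h) x\<bar> \<le> e"
    using assms(2,5) closure_subset by (intro llim_abs_diff_le) auto
  with fbar_close show ?thesis unfolding abs_le_iff by (smt (verit))
qed

lemma eventually_DP_uniform_limit:
  assumes "S \<subseteq> {0..}" "0 \<in> S" "bdd_above (f ` S)" "bdd_below (f ` S)"
    "uniform_limit S fn f sequentially" "x \<in> DP S f"
  shows "eventually (\<lambda>n. x \<in> DP S (fn n)) sequentially"
proof -
  define d where "d = (llim (closure S) (fbar S f) x - fbar S f x) / 3"
  have "0 < d" using assms(6) by (simp add: DP_def d_def)
  with assms(5) have "eventually (\<lambda>n. \<forall>z\<in>S. \<bar>f z - fn n z\<bar> \<le> d) sequentially"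
    unfolding uniform_limit_iff
    by (auto elim!: allE[of _ d] eventually_mono simp: dist_real_def abs_minus_commute)
  then show ?thesis
  proof (rule eventually_mono)
    fix n assume "\<forall>z\<in>S. \<bar>f z - fn n z\<bar> \<le> d"
    then have "\<bar>(llim (closure S) (fbar S f) x - fbar S f x)
                - (llim (closure S) (fbar S (fn n)) x - fbar S (fn n) x)\<bar> \<le> 2 * d"
      using \<open>0 < d\<close> by (intro left_jump_abs_diff_le[OF assms(1-4)]) auto
    then show "x \<in> DP S (fn n)"
      using assms(6) unfolding DP_def d_def abs_le_iff by auto
  qed
qed

lemma decreasing_on_limit:
  assumes "\<And>n. decreasing_on S (fn n)" "\<And>x. x \<in> S \<Longrightarrow> (\<lambda>n. fn n x) \<longlonglongrightarrow> f x"
  shows "decreasing_on S f"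
  unfolding decreasing_on_def
proof (intro ballI impI)
  fix x y assume "x \<in> S" "y \<in> S" "x \<le> y"
  then show "f y \<le> f x"
    using assms(1) by (intro LIMSEQ_le[OF assms(2) assms(2)]) (auto simp: decreasing_on_def)
qed

lemma decreasing_on_bdd_above:
  assumes "S \<subseteq> {0..}" "0 \<in> S" "decreasing_on S g"
  shows "bdd_above (g ` S)"
  using assms by (intro bdd_aboveI2[where M = "g 0"]) (auto simp: decreasing_on_def)

lemma right_cont_on_uniform_limit:
  assumes "\<And>n. right_cont_on S (fn n)" "uniform_limit S fn f sequentially"
  shows "right_cont_on S f"
  unfolding right_cont_on_def
proof
  fix x assume "x \<in> S"
  have "uniform_limit (S \<inter> {x..}) fn f sequentially"
    using assms(2) by (rule uniform_limit_on_subset) auto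
  moreover have "\<forall>n. (fn n \<longlongrightarrow> fn n x) (at x within (S \<inter> {x..}))"
    using assms(1) \<open>x \<in> S\<close> by (simp add: right_cont_on_def continuous_within)
  ultimately have "(f \<longlongrightarrow> f x) (at x within (S \<inter> {x..}))"
    using tendsto_uniform_limitI[OF assms(2) \<open>x \<in> S\<close>]
    by (intro swap_uniform_limit) auto
  then show "continuous (at x within (S \<inter> {x..})) f"
    unfolding continuous_within .
qed

theorem lemma2p7:
  fixes S :: "real set" and fn :: "nat \<Rightarrow> real \<Rightarrow> real" and f :: "real \<Rightarrow> real"
  assumes "S \<subseteq> {0..}" and "0 \<in> S"
    and "\<And>n. \<forall>x\<in>S. fn n x \<ge> 0"
    and "\<And>n. decreasing_on S (fn n)"
    and "\<And>n. right_cont_on S (fn n)"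
    and "uniform_limit S fn f sequentially"
    and "\<And>n. DP S (fn n) \<subseteq> S"
  shows "decreasing_on S f \<and> right_cont_on S f \<and> DP S f \<subseteq> S"
proof -
  have lim: "\<And>x. x \<in> S \<Longrightarrow> (\<lambda>n. fn n x) \<longlonglongrightarrow> f x"
    using assms(6) by (rule tendsto_uniform_limitI)
  have dec: "decreasing_on S f"
    using assms(4) lim by (rule decreasing_on_limit)
  have "0 \<le> f x" if "x \<in> S" for x
    by (rule LIMSEQ_le_const[OF lim[OF that]]) (use assms(3) that in auto)
  then have "bdd_below (f ` S)" by (intro bdd_belowI2[where m = 0])
  moreover have "bdd_above (f ` S)"
    using assms(1,2) dec by (rule decreasing_on_bdd_above)
  ultimately have "DP S f \<subseteq> S"
    using eventually_DP_uniform_limit[OF assms(1,2) _ _ assms(6)] assms(7)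
    by (metis eventually_sequentially order_refl subset_iff)
  with dec show ?thesis
    using right_cont_on_uniform_limit[OF assms(5,6)] by blast
qed

end
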